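(* Let $\mathbf{X}^{(1)}$ and $\mathbf{X}^{(2)}$ be $p$-variate random vectors with absolutely continuous distributions (populations $\Pi^{(1)}$, $\Pi^{(2)}$, with prior probabilities $\pi_1,\pi_2$). Fix a unit vector $\mathbf{u}\in\mathbb{R}^p$ and $\theta\in(0,1)$, and let $Q_Z^{(k)}(\theta;\mathbf{u})$ be the $\theta$-quantile of the continuous random variable $Z^{(k)}=\mathbf{u}^{\top}\mathbf{X}^{(k)}$, $k=1,2$. Let $Q_{\alpha}(\theta;\mathbf{u})=\min\{Q_Z^{(1)}(\theta;\mathbf{u}),Q_Z^{(2)}(\theta;\mathbf{u})\}$, and let $G_\alpha(\cdot;\mathbf{u})$, $g_\alpha(\cdot;\mathbf{u})$ and $\pi_\alpha$ be the distribution function (whose inverse gives $Q_\alpha$), density and prior probability of the population attaining this minimum; similarly let $Q_{\beta}(\theta;\mathbf{u})=\max\{Q_Z^{(1)}(\theta;\mathbf{u}),Q_Z^{(2)}(\theta;\mathbf{u})\}$ with corresponding $G_\beta(\cdot;\mathbf{u})$, $g_\beta(\cdot;\mathbf{u})$, $\pi_\beta$ for the other population. Consider the directional quantile classifier which assigns a new observation $\mathbf{y}$ to $\Pi^{(1)}$ if $\Phi^{(2)}(\theta;\mathbf{u}^{\top}\mathbf{y})-\Phi^{(1)}(\theta;\mathbf{u}^{\top}\mathbf{y})>0$ and to $\Pi^{(2)}$ otherwise. Then its probability of correct classification is $$\psi(\theta)=\pi_\alpha G_\alpha(\tilde Q(\theta;\mathbf{u});\mathbf{u})+\pi_\beta\{1-G_\beta(\tilde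 Q(\theta;\mathbf{u});\mathbf{u})\},$$ where $\tilde Q(\theta;\mathbf{u})=\theta Q_\alpha(\theta;\mathbf{u})+(1-\theta)Q_\beta(\theta;\mathbf{u})$, and analogously its misclassification rate is $$1-\psi(\theta)=\pi_\alpha\{1-G_\alpha(\tilde Q(\theta;\mathbf{u});\mathbf{u})\}+\pi_\beta G_\beta(\tilde Q(\theta;\mathbf{u});\mathbf{u}).$$
   Context: For $k=1,2$ and a real number $z$, $\Phi^{(k)}(\theta;z)=\{\theta+(1-2\theta)I(z-Q_Z^{(k)}(\theta;\mathbf{u})<0)\}\,|z-Q_Z^{(k)}(\theta;\mathbf{u})|$, where $I(\cdot)$ is the indicator function. The $\theta$-quantile $Q_Z^{(k)}(\theta;\mathbf{u})$ is the $\theta$th directional quantile of $\mathbf{X}^{(k)}$ in direction $\mathbf{u}$. *)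

theory Defs
  imports "HOL-Probability.Probability"
begin

definition check_loss :: "real \<Rightarrow> real \<Rightarrow> real \<Rightarrow> real" where
  "check_loss \<theta> q z = (\<theta> + (1 - 2 * \<theta>) * (if z - q < 0 then 1 else 0)) * \<bar>z - q\<bar>"

definition proj_cdf :: "'a measure \<Rightarrow> ('a \<Rightarrow> real ^ 'n) \<Rightarrow> real ^ 'n \<Rightarrow> real \<Rightarrow> real" where
  "proj_cdf M X u x = measure M {\<omega> \<in> space M. u \<bullet> X \<omega> \<le> x}"

definition dir_quantile :: "'a measure \<Rightarrow> ('a \<Rightarrow> real ^ 'n) \<Rightarrow> real ^ 'n \<Rightarrow> real \<Rightarrow> real" where
  "dir_quantile M X u \<theta> = Inf {x. proj_cdf M X u x \<ge> \<theta>}"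

definition dq_classify :: "real \<Rightarrow> real \<Rightarrow> real \<Rightarrow> real ^ 'n \<Rightarrow> real ^ 'n \<Rightarrow> nat" where
  "dq_classify \<theta> q1 q2 u y =
     (if check_loss \<theta> q2 (u \<bullet> y) - check_loss \<theta> q1 (u \<bullet> y) > 0 then 1 else 2)"

end

theory Submission
  imports Defs
begin

(* For q1 < q2 the difference of the check losses at q2 and at q1 is Qt - z clamped
   to [-theta (q2 - q1), (1 - theta) (q2 - q1)], with Qt = theta q1 + (1 - theta) q2.
   So the classifier assigns the population with the smaller quantile exactly when
   the projection lies below Qt, up to the tie z = Qt.  The hyperplane u . y = Qt is
   Lebesgue-null, hence carries no mass under an absolutely continuous law, and the
   probabilities of correct classification are the distribution functions at Qt. *)

lemma check_loss_diff_eq_clamp: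
  fixes a b z \<theta> :: real
  assumes "a \<le> b" "0 \<le> \<theta>" "\<theta> \<le> 1"
  shows "check_loss \<theta> b z - check_loss \<theta> a z
    = max (- \<theta> * (b - a)) (min ((1 - \<theta>) * (b - a)) (\<theta> * a + (1 - \<theta>) * b - z))"
  using assms by (auto simp: check_loss_def algebra_simps max_def min_def abs_if mult_left_mono)

lemma check_loss_diff_sgn:
  fixes a b z \<theta> :: real
  assumes "a < b" "0 < \<theta>" "\<theta> < 1"
  shows "check_loss \<theta> b z - check_loss \<theta> a z > 0 \<longleftrightarrow> z < \<theta> * a + (1 - \<theta>) * b"
    and "check_loss \<theta> b z - check_loss \<theta> a z < 0 \<longleftrightarrow> \<theta> * a + (1 - \<theta>) * b < z"
proof -
  define lo hi where "lo = - \<theta> * (b - a)" and "hi = (1 - \<theta>) * (b - a)"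
  have "lo < 0" "0 < hi"
    using assms by (simp_all add: lo_def hi_def)
  then show "check_loss \<theta> b z - check_loss \<theta> a z > 0 \<longleftrightarrow> z < \<theta> * a + (1 - \<theta>) * b"
    and "check_loss \<theta> b z - check_loss \<theta> a z < 0 \<longleftrightarrow> \<theta> * a + (1 - \<theta>) * b < z"
    using check_loss_diff_eq_clamp[of a b \<theta> z] assms
    unfolding lo_def[symmetric] hi_def[symmetric] by (auto simp: max_def min_def)
qed

lemma dq_classify_eq_1_iff_below:
  assumes "q1 < q2" "0 < \<theta>" "\<theta> < 1"
  shows "dq_classify \<theta> q1 q2 u y = 1 \<longleftrightarrow> u \<bullet> y < \<theta> * q1 + (1 - \<theta>) * q2"
  using check_loss_diff_sgn(1)[OF assms] by (simp add: dq_classify_def)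

lemma dq_classify_eq_1_iff_above:
  assumes "q2 < q1" "0 < \<theta>" "\<theta> < 1"
  shows "dq_classify \<theta> q1 q2 u y = 1 \<longleftrightarrow> \<theta> * q2 + (1 - \<theta>) * q1 < u \<bullet> y"
  using check_loss_diff_sgn(2)[OF assms, of "u \<bullet> y"] by (simp add: dq_classify_def)

lemma dq_classify_eq_2_iff: "dq_classify \<theta> q1 q2 u y = 2 \<longleftrightarrow> dq_classify \<theta> q1 q2 u y \<noteq> 1"
  by (simp add: dq_classify_def)

lemma AE_lborel_not_hyperplane:
  fixes u :: "'b::euclidean_space"
  assumes "u \<noteq> 0"
  shows "AE y in lborel. u \<bullet> y \<noteq> c"
proof -
  have "{y. u \<bullet> y = c} \<in> null_sets lebesgue"
    using negligible_hyperplane[of u c] assms by (simp add: negligible_iff_null_sets)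
  moreover have "{y. u \<bullet> y = c} \<in> sets lborel"
    by (simp add: borel_closed closed_hyperplane)
  ultimately have "{y. u \<bullet> y = c} \<in> null_sets lborel"
    by (simp add: null_sets_completion_iff)
  then show ?thesis
    by (rule AE_not_in[THEN AE_mp]) auto
qed

lemma AE_proj_not_eq:
  fixes Y :: "'a \<Rightarrow> 'b::euclidean_space"
  assumes "Y \<in> borel_measurable M" "absolutely_continuous lborel (distr M lborel Y)" "u \<noteq> 0"
  shows "AE \<omega> in M. u \<bullet> Y \<omega> \<noteq> c"
proof -
  have "AE y in distr M lborel Y. u \<bullet> y \<noteq> c"
    using absolutely_continuous_AE[OF _ assms(2) AE_lborel_not_hyperplane[OF assms(3)]] by simp
  then show ?thesis
    by (rule AE_distrD[rotated]) (use assms(1) in simp)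
qed

lemma prob_proj_less_eq_proj_cdf:
  assumes "prob_space M" "Y \<in> borel_measurable M"
    "absolutely_continuous lborel (distr M lborel Y)" "u \<noteq> 0"
  shows "measure M {\<omega> \<in> space M. u \<bullet> Y \<omega> < c} = proj_cdf M Y u c"
proof -
  interpret prob_space M by fact
  have "AE \<omega> in M. u \<bullet> Y \<omega> < c \<longleftrightarrow> u \<bullet> Y \<omega> \<le> c"
    using AE_proj_not_eq[OF assms(2-4), of c] by eventually_elim auto
  moreover have "(\<lambda>\<omega>. u \<bullet> Y \<omega>) \<in> borel_measurable M"
    using assms(2) by measurable
  ultimately show ?thesis
    unfolding proj_cdf_def by (intro prob_eq_AE) auto
qed

lemma prob_dq_classify:
  fixes q :: "nat \<Rightarrow> real"
  assumes "prob_space M" "Y \<in> borel_measurable M"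
    "absolutely_continuous lborel (distr M lborel Y)" "u \<noteq> 0"
    "0 < \<theta>" "\<theta> < 1" "{\<alpha>, \<beta>} = {1, 2}" "q \<alpha> < q \<beta>"
  defines "m \<equiv> \<theta> * q \<alpha> + (1 - \<theta>) * q \<beta>"
  shows "measure M {\<omega> \<in> space M. dq_classify \<theta> (q 1) (q 2) u (Y \<omega>) = \<alpha>} = proj_cdf M Y u m"
    and "measure M {\<omega> \<in> space M. dq_classify \<theta> (q 1) (q 2) u (Y \<omega>) = \<beta>} = 1 - proj_cdf M Y u m"
proof -
  interpret prob_space M by fact
  have \<alpha>\<beta>: "\<alpha> = 1 \<and> \<beta> = 2 \<or> \<alpha> = 2 \<and> \<beta> = 1"
    using assms(7) by (metis doubleton_eq_iff)
  have classified_\<alpha>_iff: "dq_classify \<theta> (q 1) (q 2) u y = \<alpha> \<longleftrightarrow>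
      (if \<alpha> = 1 then u \<bullet> y < m else u \<bullet> y \<le> m)" for y
    using \<alpha>\<beta>
  proof (elim disjE conjE)
    assume "\<alpha> = 1" "\<beta> = 2"
    then show ?thesis
      using dq_classify_eq_1_iff_below[of "q 1" "q 2" \<theta> u y] assms(5,6,8) by (simp add: m_def)
  next
    assume "\<alpha> = 2" "\<beta> = 1"
    then show ?thesis
      using dq_classify_eq_1_iff_above[of "q 2" "q 1" \<theta> u y] assms(5,6,8)
      by (simp add: m_def dq_classify_eq_2_iff not_less)
  qed
  show correct:
    "measure M {\<omega> \<in> space M. dq_classify \<theta> (q 1) (q 2) u (Y \<omega>) = \<alpha>} = proj_cdf M Y u m"
    unfolding classified_\<alpha>_iff using prob_proj_less_eq_proj_cdf[OF assms(1-4)]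
    by (cases "\<alpha> = 1") (simp_all add: proj_cdf_def)
  have "{\<omega> \<in> space M. dq_classify \<theta> (q 1) (q 2) u (Y \<omega>) = \<alpha>} \<in> events"
    unfolding classified_\<alpha>_iff using assms(2) by measurable
  from prob_neg[OF this] show
    "measure M {\<omega> \<in> space M. dq_classify \<theta> (q 1) (q 2) u (Y \<omega>) = \<beta>} = 1 - proj_cdf M Y u m"
    using \<alpha>\<beta> correct by (auto simp: dq_classify_eq_2_iff)
qed

theorem lemma1:
  fixes M :: "'a measure"
    and X :: "nat \<Rightarrow> 'a \<Rightarrow> real ^ 'n"
    and \<pi> :: "nat \<Rightarrow> real"
    and u :: "real ^ 'n"
    and \<theta> :: real
    and \<alpha> \<beta> :: nat
  assumes "prob_space M"
    and "\<And>k. k \<in> {1, 2} \<Longrightarrow> X k \<in> borel_measurable M"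
    and "\<And>k. k \<in> {1, 2} \<Longrightarrow> absolutely_continuous lborel (distr M lborel (X k))"
    and "\<pi> 1 \<ge> 0" and "\<pi> 2 \<ge> 0" and "\<pi> 1 + \<pi> 2 = 1"
    and "norm u = 1"
    and "0 < \<theta>" and "\<theta> < 1"
    and "\<alpha> \<in> {1, 2}" and "\<beta> \<in> {1, 2}" and "\<alpha> \<noteq> \<beta>"
    and "dir_quantile M (X \<alpha>) u \<theta> < dir_quantile M (X \<beta>) u \<theta>"
  shows
    "let Q = (\<lambda>k. dir_quantile M (X k) u \<theta>);
         G = (\<lambda>k. proj_cdf M (X k) u);
         Qt = \<theta> * Q \<alpha> + (1 - \<theta>) * Q \<beta>;
         \<psi> = \<pi> 1 * measure M {\<omega> \<in> space M. dq_classify \<theta> (Q 1) (Q 2) u (X 1 \<omega>) = 1}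
             + \<pi> 2 * measure M {\<omega> \<in> space M. dq_classify \<theta> (Q 1) (Q 2) u (X 2 \<omega>) = 2}
     in \<psi> = \<pi> \<alpha> * G \<alpha> Qt + \<pi> \<beta> * (1 - G \<beta> Qt)
      \<and> 1 - \<psi> = \<pi> \<alpha> * (1 - G \<alpha> Qt) + \<pi> \<beta> * G \<beta> Qt"
proof -
  define Q where "Q k = dir_quantile M (X k) u \<theta>" for k
  define G where "G k = proj_cdf M (X k) u" for k
  define Qt where "Qt = \<theta> * Q \<alpha> + (1 - \<theta>) * Q \<beta>"
  define correct where
    "correct k = measure M {\<omega> \<in> space M. dq_classify \<theta> (Q 1) (Q 2) u (X k \<omega>) = k}" for k
  have "\<alpha> = 1 \<and> \<beta> = 2 \<or> \<alpha> = 2 \<and> \<beta> = 1"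
    using assms(10-12) by auto
  then have \<alpha>\<beta>: "{\<alpha>, \<beta>} = {1, 2}"
    and \<psi>_eq: "\<pi> 1 * correct 1 + \<pi> 2 * correct 2 = \<pi> \<alpha> * correct \<alpha> + \<pi> \<beta> * correct \<beta>"
    and \<pi>_sum: "\<pi> \<alpha> + \<pi> \<beta> = 1"
    using assms(6) by auto
  have "u \<noteq> 0"
    using assms(7) by auto
  note prob_correct = prob_dq_classify[OF assms(1) _ _ \<open>u \<noteq> 0\<close> assms(8,9) \<alpha>\<beta>, of _ Q]
  have "correct \<alpha> = G \<alpha> Qt" "correct \<beta> = 1 - G \<beta> Qt"
    using prob_correct(1)[OF assms(2,3)[OF assms(10)]] prob_correct(2)[OF assms(2,3)[OF assms(11)]]
      assms(13) unfolding correct_def G_def Qt_def Q_def by simp_all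
  with \<psi>_eq \<pi>_sum show ?thesis
    unfolding Let_def Q_def[symmetric] G_def[symmetric] Qt_def[symmetric] correct_def[symmetric]
    by (simp add: algebra_simps)
qed

end
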